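(* If an invariant state is supported on $V\ominus\operatorname{ran}|Z|_1$, then it is supported on $W$.
   Context: Fix integers $N\ge 2$ and $n_1\ge n_2\ge\dots\ge n_N\ge 1$. Let $\mathcal H$ be a finite-dimensional complex Hilbert space with orthonormal basis $\{|-\rangle,|+\rangle\}\cup\{|a_k\rangle:1\le k\le N,\ 0\le a\le n_k-1\}$. For vectors $x,y$, $|x\rangle\langle y|$ denotes the operator $u\mapsto\langle y,u\rangle x$. Put $E_k=\mathrm{span}\{|a_k\rangle:0\le a\le n_k-1\}$, $P_k$ the orthogonal projection onto $E_k$, $P_\pm=|\pm\rangle\langle\pm|$, $\zeta_k=e^{2\pi i/n_k}$, and $\varphi_{a_k}=n_k^{-1/2}\sum_{b=0}^{n_k-1}\zeta_k^{-ba}|b_k\rangle$ for $0\le a\le n_k-1$. For $1\le k\le N-1$ let $Z_k=n_k^{-1/2}\sum_{b=0}^{n_{k+1}-1}\sum_{a=0}^{n_k-1}\zeta_k^{ba}|b_{k+1}\rangle\langle a_k|$ (an operator on $\mathcal H$), $|Z|_k=Z_k^*Z_k$. The transport operator is $Z=\sum_{k=1}^{N-1}Z_k$. Let $\omega$ range over the set $\{\omega_+,\omega_-,\omega_1,\dots,\omega_{N-1}\}$ of (distinct) Bohr frequencies, and let $\Gamma_{\pm,\omega}>0$, $\gamma_{\pm,\omega}\in\mathbb R$ be constants. Kraus operators: $L_{-,\omega_+}=\sqrt{n_1\Gamma_{-,\omega_+}}|\varphi_{0_1}\rangle\langle +|$, $L_{+,\omega_+}=\sqrt{n_1\Gamma_{+,\omega_+}}|+\rangle\langle\varphi_{0_1}|$,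 $L_{-,\omega_k}=\sqrt{\Gamma_{-,\omega_k}}Z_k$, $L_{+,\omega_k}=\sqrt{\Gamma_{+,\omega_k}}Z_k^*$ ($1\le k\le N-1$), $L_{-,\omega_-}=\sqrt{\Gamma_{-,\omega_-}}|-\rangle\langle\varphi_{0_N}|$, $L_{+,\omega_-}=0$. Effective Hamiltonian $H_{\mathrm{eff}}=n_1\gamma_{-,\omega_+}P_+-n_1\gamma_{+,\omega_+}|\varphi_{0_1}\rangle\langle\varphi_{0_1}|+\gamma_{-,\omega_-}|\varphi_{0_N}\rangle\langle\varphi_{0_N}|-\gamma_{+,\omega_-}P_-+\sum_{k=1}^{N-1}(\gamma_{-,\omega_k}|Z|_k-\gamma_{+,\omega_k}P_{k+1})$. The generator is $\mathcal L(\rho)=-i[H_{\mathrm{eff}},\rho]+\sum_{\omega}\sum_{\epsilon=\pm}\big(L_{\epsilon,\omega}\rho L_{\epsilon,\omega}^*-\tfrac12\{L_{\epsilon,\omega}^*L_{\epsilon,\omega},\rho\}\big)$. A state is a positive operator of trace one; it is invariant if $\mathcal L(\rho)=0$; an operator is supported on a subspace $E$ if its range is contained in $E$. The interaction-free subspace is $W=\bigcap_{\omega,\epsilon=\pm}(\ker L_{\epsilon,\omega}\cap\ker L_{\epsilon,\omega}^* )$. $V$ is the orthogonal complement of the set $\{|-\rangle,|+\rangle,Z^n\varphi_{0_1},Z^{*n}\varphi_{0_N},Z^{*s}\varphi_{0_{2m+1}}:0\le n\le N-1,\ 1\le m\le (N-1)/2,\ 1\le s\le 2m\}$. $A\ominus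 B$ denotes $A\cap B^\perp$. *)

theory Defs
  imports "HOL-Analysis.Analysis" "HOL-Library.Function_Algebras"
begin

text \<open>Basis labels: Minus = |->, Plus = |+>, Site k a = |a_k> (1 <= k <= N, 0 <= a <= n_k - 1).
  Vectors are functions lab => complex vanishing off the basis; operators are their
  matrices lab => lab => complex with respect to the basis (entry A i j = <e_i, A e_j>).\<close>

datatype lab = Minus | Plus | Site nat nat

type_synonym vec = "lab \<Rightarrow> complex"
type_synonym op = "lab \<Rightarrow> lab \<Rightarrow> complex"

definition basis :: "nat \<Rightarrow> (nat \<Rightarrow> nat) \<Rightarrow> lab set" where
  "basis N n = {Minus, Plus} \<union> {Site k a | k a. 1 \<le> k \<and> k \<le> N \<and> a < n k}"

definition Hsp :: "nat \<Rightarrow> (nat \<Rightarrow> nat) \<Rightarrow> vec set" where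
  "Hsp N n = {v. \<forall>i. i \<notin> basis N n \<longrightarrow> v i = 0}"

definition is_op :: "nat \<Rightarrow> (nat \<Rightarrow> nat) \<Rightarrow> op \<Rightarrow> bool" where
  "is_op N n A \<longleftrightarrow> (\<forall>i j. i \<notin> basis N n \<or> j \<notin> basis N n \<longrightarrow> A i j = 0)"

definition inner_H :: "nat \<Rightarrow> (nat \<Rightarrow> nat) \<Rightarrow> vec \<Rightarrow> vec \<Rightarrow> complex" where
  "inner_H N n x y = (\<Sum>i\<in>basis N n. cnj (x i) * y i)"

definition app :: "nat \<Rightarrow> (nat \<Rightarrow> nat) \<Rightarrow> op \<Rightarrow> vec \<Rightarrow> vec" where
  "app N n A v = (\<lambda>i. if i \<in> basis N n then (\<Sum>j\<in>basis N n. A i j * v j) else 0)"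

definition mmul :: "nat \<Rightarrow> (nat \<Rightarrow> nat) \<Rightarrow> op \<Rightarrow> op \<Rightarrow> op" where
  "mmul N n A C = (\<lambda>i j. \<Sum>l\<in>basis N n. A i l * C l j)"

definition adj :: "op \<Rightarrow> op" where
  "adj A = (\<lambda>i j. cnj (A j i))"

definition scal :: "complex \<Rightarrow> op \<Rightarrow> op" where
  "scal c A = (\<lambda>i j. c * A i j)"

definition ket :: "lab \<Rightarrow> vec" where
  "ket l = (\<lambda>i. if i = l then 1 else 0)"

definition ketbra :: "vec \<Rightarrow> vec \<Rightarrow> op" where
  "ketbra x y = (\<lambda>i j. x i * cnj (y j))"

definition trace_H :: "nat \<Rightarrow> (nat \<Rightarrow> nat) \<Rightarrow> op \<Rightarrow> complex" where
  "trace_H N n A = (\<Sum>i\<in>basis N n. A i i)"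

definition positive_op :: "nat \<Rightarrow> (nat \<Rightarrow> nat) \<Rightarrow> op \<Rightarrow> bool" where
  "positive_op N n A \<longleftrightarrow> is_op N n A \<and>
     (\<forall>v\<in>Hsp N n. Im (inner_H N n v (app N n A v)) = 0 \<and> 0 \<le> Re (inner_H N n v (app N n A v)))"

definition is_state :: "nat \<Rightarrow> (nat \<Rightarrow> nat) \<Rightarrow> op \<Rightarrow> bool" where
  "is_state N n \<rho> \<longleftrightarrow> positive_op N n \<rho> \<and> trace_H N n \<rho> = 1"

definition ran_op :: "nat \<Rightarrow> (nat \<Rightarrow> nat) \<Rightarrow> op \<Rightarrow> vec set" where
  "ran_op N n A = app N n A ` Hsp N n"

definition ker_op :: "nat \<Rightarrow> (nat \<Rightarrow> nat) \<Rightarrow> op \<Rightarrow> vec set" where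
  "ker_op N n A = {v \<in> Hsp N n. app N n A v = (\<lambda>_. 0)}"

definition supported_on :: "nat \<Rightarrow> (nat \<Rightarrow> nat) \<Rightarrow> op \<Rightarrow> vec set \<Rightarrow> bool" where
  "supported_on N n A E \<longleftrightarrow> ran_op N n A \<subseteq> E"

definition perp :: "nat \<Rightarrow> (nat \<Rightarrow> nat) \<Rightarrow> vec set \<Rightarrow> vec set" where
  "perp N n S = {v \<in> Hsp N n. \<forall>s\<in>S. inner_H N n s v = 0}"

definition zeta :: "(nat \<Rightarrow> nat) \<Rightarrow> nat \<Rightarrow> complex" where
  "zeta n k = cis (2 * pi / real (n k))"

definition phi :: "(nat \<Rightarrow> nat) \<Rightarrow> nat \<Rightarrow> nat \<Rightarrow> vec" where
  "phi n k a = (\<lambda>i. complex_of_real (1 / sqrt (real (n k))) *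
      (\<Sum>b<n k. inverse (zeta n k ^ (b * a)) * ket (Site k b) i))"

definition Zop :: "(nat \<Rightarrow> nat) \<Rightarrow> nat \<Rightarrow> op" where
  "Zop n k = (\<lambda>i j. complex_of_real (1 / sqrt (real (n k))) *
      (\<Sum>b<n (Suc k). \<Sum>a<n k. zeta n k ^ (b * a) * ketbra (ket (Site (Suc k) b)) (ket (Site k a)) i j))"

definition absZ :: "nat \<Rightarrow> (nat \<Rightarrow> nat) \<Rightarrow> nat \<Rightarrow> op" where
  "absZ N n k = mmul N n (adj (Zop n k)) (Zop n k)"

definition Pk :: "(nat \<Rightarrow> nat) \<Rightarrow> nat \<Rightarrow> op" where
  "Pk n k = (\<lambda>i j. \<Sum>a<n k. ketbra (ket (Site k a)) (ket (Site k a)) i j)"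

definition Pplus :: op where "Pplus = ketbra (ket Plus) (ket Plus)"
definition Pminus :: op where "Pminus = ketbra (ket Minus) (ket Minus)"

definition Ztot :: "nat \<Rightarrow> (nat \<Rightarrow> nat) \<Rightarrow> op" where
  "Ztot N n = (\<Sum>k\<in>{1..N-1}. Zop n k)"

text \<open>Bohr frequencies omega_+, omega_-, omega_k (distinct labels), and signs epsilon.\<close>
datatype freq = Wp | Wm | Wk nat
datatype pm = Pos | Neg

definition freqs :: "nat \<Rightarrow> freq set" where
  "freqs N = {Wp, Wm} \<union> Wk ` {1..N-1}"

definition Kraus :: "nat \<Rightarrow> (nat \<Rightarrow> nat) \<Rightarrow> (pm \<Rightarrow> freq \<Rightarrow> real) \<Rightarrow> pm \<Rightarrow> freq \<Rightarrow> op" where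
  "Kraus N n \<Gamma> e w = (case (e, w) of
     (Neg, Wp) \<Rightarrow> scal (sqrt (real (n 1) * \<Gamma> Neg Wp)) (ketbra (phi n 1 0) (ket Plus))
   | (Pos, Wp) \<Rightarrow> scal (sqrt (real (n 1) * \<Gamma> Pos Wp)) (ketbra (ket Plus) (phi n 1 0))
   | (Neg, Wk k) \<Rightarrow> scal (sqrt (\<Gamma> Neg (Wk k))) (Zop n k)
   | (Pos, Wk k) \<Rightarrow> scal (sqrt (\<Gamma> Pos (Wk k))) (adj (Zop n k))
   | (Neg, Wm) \<Rightarrow> scal (sqrt (\<Gamma> Neg Wm)) (ketbra (ket Minus) (phi n N 0))
   | (Pos, Wm) \<Rightarrow> (\<lambda>_ _. 0))"

definition Heff :: "nat \<Rightarrow> (nat \<Rightarrow> nat) \<Rightarrow> (pm \<Rightarrow> freq \<Rightarrow> real) \<Rightarrow> op" where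
  "Heff N n \<gamma> =
      scal (real (n 1) * \<gamma> Neg Wp) Pplus
    - scal (real (n 1) * \<gamma> Pos Wp) (ketbra (phi n 1 0) (phi n 1 0))
    + scal (\<gamma> Neg Wm) (ketbra (phi n N 0) (phi n N 0))
    - scal (\<gamma> Pos Wm) Pminus
    + (\<Sum>k\<in>{1..N-1}. scal (\<gamma> Neg (Wk k)) (absZ N n k) - scal (\<gamma> Pos (Wk k)) (Pk n (Suc k)))"

definition generator :: "nat \<Rightarrow> (nat \<Rightarrow> nat) \<Rightarrow> (pm \<Rightarrow> freq \<Rightarrow> real) \<Rightarrow> (pm \<Rightarrow> freq \<Rightarrow> real) \<Rightarrow> op \<Rightarrow> op" where
  "generator N n \<Gamma> \<gamma> \<rho> =
     scal (- \<i>) (mmul N n (Heff N n \<gamma>) \<rho> - mmul N n \<rho> (Heff N n \<gamma>))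
   + (\<Sum>w\<in>freqs N. \<Sum>e\<in>{Pos, Neg}.
        mmul N n (mmul N n (Kraus N n \<Gamma> e w) \<rho>) (adj (Kraus N n \<Gamma> e w))
      - scal (1/2) (mmul N n (mmul N n (adj (Kraus N n \<Gamma> e w)) (Kraus N n \<Gamma> e w)) \<rho>
                  + mmul N n \<rho> (mmul N n (adj (Kraus N n \<Gamma> e w)) (Kraus N n \<Gamma> e w))))"

definition invariant_state :: "nat \<Rightarrow> (nat \<Rightarrow> nat) \<Rightarrow> (pm \<Rightarrow> freq \<Rightarrow> real) \<Rightarrow> (pm \<Rightarrow> freq \<Rightarrow> real) \<Rightarrow> op \<Rightarrow> bool" where
  "invariant_state N n \<Gamma> \<gamma> \<rho> \<longleftrightarrow> is_state N n \<rho> \<and>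
     (\<forall>i\<in>basis N n. \<forall>j\<in>basis N n. generator N n \<Gamma> \<gamma> \<rho> i j = 0)"

definition Wsp :: "nat \<Rightarrow> (nat \<Rightarrow> nat) \<Rightarrow> (pm \<Rightarrow> freq \<Rightarrow> real) \<Rightarrow> vec set" where
  "Wsp N n \<Gamma> = Hsp N n \<inter> (\<Inter>w\<in>freqs N. \<Inter>e\<in>{Pos, Neg}.
      ker_op N n (Kraus N n \<Gamma> e w) \<inter> ker_op N n (adj (Kraus N n \<Gamma> e w)))"

definition Vgen :: "nat \<Rightarrow> (nat \<Rightarrow> nat) \<Rightarrow> vec set" where
  "Vgen N n = {ket Minus, ket Plus}
     \<union> {(app N n (Ztot N n) ^^ m) (phi n 1 0) | m. m \<le> N - 1}
     \<union> {(app N n (adj (Ztot N n)) ^^ m) (phi n N 0) | m. m \<le> N - 1}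
     \<union> {(app N n (adj (Ztot N n)) ^^ s) (phi n (2*m+1) 0) | m s. 1 \<le> m \<and> 2*m \<le> N - 1 \<and> 1 \<le> s \<and> s \<le> 2*m}"

definition Vsp :: "nat \<Rightarrow> (nat \<Rightarrow> nat) \<Rightarrow> vec set" where
  "Vsp N n = perp N n (Vgen N n)"

end

theory Submission
  imports Defs
begin

text \<open>
  If \<open>\<rho> x = 0\<close> for an invariant state \<open>\<rho>\<close>, the quantity \<open>\<langle>x, L(\<rho>) x\<rangle> = 0\<close> reduces to a
  sum of the nonnegative terms \<open>\<langle>K\<^sup>* x, \<rho> K\<^sup>* x\<rangle>\<close> over the Kraus operators \<open>K\<close>, so the kernel
  of \<open>\<rho>\<close> is invariant under every \<open>K\<^sup>*\<close>, in particular under every \<open>Z\<^sub>k\<close>.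

  Because \<open>n\<^sub>k\<^sub>+\<^sub>1 \<le> n\<^sub>k\<close>, orthogonality of the \<open>n\<^sub>k\<close>-th roots of unity makes
  \<open>Z\<^sub>k Z\<^sub>k\<^sup>*\<close> the identity on \<open>E\<^sub>k\<^sub>+\<^sub>1\<close>. Hence for \<open>e \<in> E\<^sub>2\<close> the vector
  \<open>Z\<^sub>1\<^sup>* e\<close> is fixed by \<open>|Z|\<^sub>1\<close>; as \<open>\<rho>\<close> is self-adjoint with range orthogonal to
  \<open>ran |Z|\<^sub>1\<close>, it annihilates \<open>Z\<^sub>1\<^sup>* e\<close>, and applying \<open>Z\<^sub>1\<close> gives \<open>\<rho> e = 0\<close>.
  Inductively \<open>\<rho>\<close> annihilates \<open>E\<^sub>2, \<dots>, E\<^sub>N\<close>, because \<open>e = Z\<^sub>k (Z\<^sub>k\<^sup>* e)\<close> with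
  \<open>Z\<^sub>k\<^sup>* e \<in> E\<^sub>k\<close>. So the range of \<open>\<rho>\<close> lies in \<open>E\<^sub>1\<close>, where orthogonality to
  the vectors \<open>\<phi>\<close> at \<open>0\<^sub>1\<close> and \<open>0\<^sub>N\<close> (from \<open>V\<close>) and to \<open>ran |Z|\<^sub>1\<close> (which forces
  \<open>Z\<^sub>1 = 0\<close> there) make every Kraus operator and its adjoint vanish.
\<close>

section \<open>Matrices on the labelled basis\<close>

lemma finite_basis [simp]: "finite (basis N n)"
proof -
  have "basis N n \<subseteq> {Minus, Plus} \<union> (\<lambda>(k, a). Site k a) ` (SIGMA k:{1..N}. {..<n k})"
    by (auto simp: basis_def)
  then show ?thesis
    by (rule finite_subset) auto
qed

lemma basis_Site [simp]: "Site k a \<in> basis N n \<longleftrightarrow> 1 \<le> k \<and> k \<le> N \<and> a < n k"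
  by (auto simp: basis_def)

lemma basis_Plus [simp]: "Plus \<in> basis N n"
  and basis_Minus [simp]: "Minus \<in> basis N n"
  by (auto simp: basis_def)

lemma app_in_Hsp [simp]: "app N n A v \<in> Hsp N n"
  by (simp add: app_def Hsp_def)

lemma sum_mult_ket: "l \<in> basis N n \<Longrightarrow> (\<Sum>j\<in>basis N n. f j * ket l j) = f l"
  by (simp add: sum.remove[of _ l] ket_def)

lemma app_ket: "l \<in> basis N n \<Longrightarrow> app N n A (ket l) = (\<lambda>i. if i \<in> basis N n then A i l else 0)"
  unfolding app_def by (intro ext if_cong refl sum_mult_ket)

lemma inner_ket: "l \<in> basis N n \<Longrightarrow> inner_H N n (ket l) w = w l"
  by (simp add: inner_H_def sum.remove[of _ l] ket_def)

lemma inner_app_adj: "inner_H N n x (app N n A w) = inner_H N n (app N n (adj A) x) w"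
proof -
  have "inner_H N n x (app N n A w) = (\<Sum>i\<in>basis N n. \<Sum>j\<in>basis N n. cnj (x i) * A i j * w j)"
    by (simp add: inner_H_def app_def sum_distrib_left mult_ac)
  also have "\<dots> = (\<Sum>j\<in>basis N n. \<Sum>i\<in>basis N n. cnj (x i) * A i j * w j)"
    by (rule sum.swap)
  also have "\<dots> = inner_H N n (app N n (adj A) x) w"
    by (simp add: inner_H_def app_def adj_def sum_distrib_left sum_distrib_right mult_ac)
  finally show ?thesis .
qed

lemma app_mmul: "app N n (mmul N n A C) v = app N n A (app N n C v)"
proof -
  have "(\<Sum>j\<in>basis N n. (\<Sum>l\<in>basis N n. A i l * C l j) * v j)
      = (\<Sum>l\<in>basis N n. A i l * (\<Sum>j\<in>basis N n. C l j * v j))" for i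
    unfolding sum_distrib_left sum_distrib_right mult.assoc by (rule sum.swap)
  then show ?thesis
    by (auto simp: app_def mmul_def cong: if_cong)
qed

lemma app_scal: "app N n (scal c A) v = (\<lambda>i. c * app N n A v i)"
  by (auto simp: app_def scal_def sum_distrib_left mult_ac)

lemma app_cmult: "app N n A (\<lambda>i. c * v i) = (\<lambda>i. c * app N n A v i)"
  by (auto simp: app_def sum_distrib_left mult_ac)

lemma app_ketbra: "app N n (ketbra x y) w = (\<lambda>i. if i \<in> basis N n then x i * inner_H N n y w else 0)"
  by (auto simp: app_def ketbra_def inner_H_def sum_distrib_left mult_ac)

lemma app_eq_0_if_columns_vanish:
  assumes "\<forall>l\<in>basis N n. v l \<noteq> 0 \<longrightarrow> app N n A (ket l) = (\<lambda>_. 0)"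
  shows "app N n A v = (\<lambda>_. 0)"
proof -
  have "A i l * v l = 0" if "i \<in> basis N n" "l \<in> basis N n" for i l
  proof (cases "v l = 0")
    case False
    then have "app N n A (ket l) i = 0"
      using assms that by simp
    then show ?thesis
      using that by (simp add: app_ket)
  qed simp
  then show ?thesis
    by (auto simp: app_def fun_eq_iff intro!: sum.neutral)
qed

lemma app_zero [simp]: "app N n (\<lambda>_ _. 0) v = (\<lambda>_. 0)"
  by (simp add: app_def fun_eq_iff)

lemma adj_zero [simp]: "adj (\<lambda>_ _. 0) = (\<lambda>_ _. 0)"
  by (simp add: adj_def)

lemma adj_scal: "adj (scal c A) = scal (cnj c) (adj A)"
  by (simp add: adj_def scal_def)

lemma adj_adj [simp]: "adj (adj A) = A"
  by (simp add: adj_def)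

lemma adj_ketbra: "adj (ketbra x y) = ketbra y x"
  by (simp add: adj_def ketbra_def mult.commute)

lemma inner_H_self: "inner_H N n x x = of_real (\<Sum>i\<in>basis N n. (cmod (x i))\<^sup>2)"
  unfolding inner_H_def of_real_sum
  by (intro sum.cong refl) (metis complex_norm_square mult.commute of_real_power)

lemma inner_H_self_eq_0:
  assumes "x \<in> Hsp N n"
  shows "inner_H N n x x = 0 \<longleftrightarrow> x = (\<lambda>_. 0)"
proof
  assume "inner_H N n x x = 0"
  then have "\<forall>i\<in>basis N n. (cmod (x i))\<^sup>2 = 0"
    unfolding inner_H_self of_real_eq_0_iff by (simp add: sum_nonneg_eq_0_iff)
  then show "x = (\<lambda>_. 0)"
    using assms by (auto simp: Hsp_def)
qed (simp add: inner_H_def)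


section \<open>Positive operators\<close>

definition sesq :: "nat \<Rightarrow> (nat \<Rightarrow> nat) \<Rightarrow> op \<Rightarrow> vec \<Rightarrow> vec \<Rightarrow> complex" where
  "sesq N n A x y = (\<Sum>i\<in>basis N n. \<Sum>j\<in>basis N n. cnj (x i) * A i j * y j)"

lemma inner_app_eq_sesq: "inner_H N n x (app N n A y) = sesq N n A x y"
  by (simp add: inner_H_def app_def sesq_def sum_distrib_left mult.assoc)

lemma sesq_add: "sesq N n (A + B) x y = sesq N n A x y + sesq N n B x y"
  by (simp add: sesq_def algebra_simps sum.distrib)

lemma sesq_diff: "sesq N n (A - B) x y = sesq N n A x y - sesq N n B x y"
  by (simp add: sesq_def algebra_simps sum_subtractf)

lemma sesq_scal: "sesq N n (scal c A) x y = c * sesq N n A x y"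
  by (simp add: sesq_def scal_def sum_distrib_left mult_ac)

lemma sesq_sum: "sesq N n (sum f S) x y = (\<Sum>s\<in>S. sesq N n (f s) x y)"
  by (induct S rule: infinite_finite_induct) (simp_all add: sesq_def distrib_left distrib_right sum.distrib)

lemma sesq_ket: "i \<in> basis N n \<Longrightarrow> j \<in> basis N n \<Longrightarrow> sesq N n A (ket i) (ket j) = A i j"
  by (simp add: sesq_def sum.remove[of _ i] sum.remove[of _ j] ket_def)

lemma sesq_expand:
  "sesq N n A (\<lambda>i. x i + c * u i) (\<lambda>i. x i + c * u i) =
     sesq N n A x x + c * sesq N n A x u + cnj c * sesq N n A u x + cnj c * c * sesq N n A u u"
  by (simp add: sesq_def algebra_simps sum.distrib sum_distrib_left)

definition hermitian_op :: "nat \<Rightarrow> (nat \<Rightarrow> nat) \<Rightarrow> op \<Rightarrow> bool" where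
  "hermitian_op N n A \<longleftrightarrow> (\<forall>i\<in>basis N n. \<forall>j\<in>basis N n. A i j = cnj (A j i))"

lemma positive_op_sesq:
  assumes "positive_op N n A" "v \<in> Hsp N n"
  shows "Im (sesq N n A v v) = 0" "0 \<le> Re (sesq N n A v v)"
  using assms by (auto simp: positive_op_def inner_app_eq_sesq)

lemma positive_op_hermitian:
  assumes pos: "positive_op N n A"
  shows "hermitian_op N n A"
  unfolding hermitian_op_def
proof (intro ballI)
  fix i j assume i: "i \<in> basis N n" and j: "j \<in> basis N n"
  define f where "f c = sesq N n A (\<lambda>l. ket i l + c * ket j l) (\<lambda>l. ket i l + c * ket j l)" for c
  have f_eq: "f c = A i i + c * A i j + cnj c * A j i + cnj c * c * A j j" for c
    using i j by (simp add: f_def sesq_expand sesq_ket)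
  have "Im (f c) = 0" for c
    unfolding f_def using i j by (intro positive_op_sesq(1)[OF pos]) (auto simp: Hsp_def ket_def)
  from this[of 0] this[of 1] this[of "-1"] this[of "\<i>"] show "A i j = cnj (A j i)"
    unfolding f_eq by (simp add: complex_eq_iff)
qed

lemma sesq_hermitian_swap:
  assumes "hermitian_op N n A"
  shows "sesq N n A y z = cnj (sesq N n A z y)"
proof -
  have "cnj (sesq N n A z y) = (\<Sum>i\<in>basis N n. \<Sum>j\<in>basis N n. z i * cnj (A i j) * cnj (y j))"
    by (simp add: sesq_def)
  also have "\<dots> = (\<Sum>i\<in>basis N n. \<Sum>j\<in>basis N n. cnj (y j) * A j i * z i)"
    using assms unfolding hermitian_op_def
    by (intro sum.cong refl) (metis complex_cnj_cnj mult.commute mult.left_commute)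
  also have "\<dots> = sesq N n A y z"
    unfolding sesq_def by (rule sum.swap)
  finally show ?thesis
    by simp
qed

lemma app_adj_hermitian:
  assumes "hermitian_op N n A"
  shows "app N n (adj A) = app N n A"
proof -
  have "adj A i j = A i j" if "i \<in> basis N n" "j \<in> basis N n" for i j
    using assms that unfolding hermitian_op_def adj_def by (metis complex_cnj_cnj)
  then show ?thesis
    by (auto simp: app_def fun_eq_iff intro!: sum.cong)
qed

lemma hermitian_kernel_orth_range:
  assumes "hermitian_op N n A" "app N n A u = (\<lambda>_. 0)"
  shows "inner_H N n u (app N n A v) = 0"
proof -
  have "inner_H N n u (app N n A v) = inner_H N n (app N n (adj A) u) v"
    by (rule inner_app_adj)
  then show ?thesis
    using assms by (simp add: app_adj_hermitian inner_H_def)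
qed

lemma hermitian_kernel_if_orth_range:
  assumes herm: "hermitian_op N n A" and orth: "\<forall>v\<in>Hsp N n. inner_H N n g (app N n A v) = 0"
  shows "app N n A g = (\<lambda>_. 0)"
proof -
  have "inner_H N n (app N n A g) (app N n A g) = inner_H N n g (app N n A (app N n A g))"
    by (simp add: inner_app_adj app_adj_hermitian[OF herm])
  also have "\<dots> = 0"
    using orth by simp
  finally show ?thesis
    by (simp add: inner_H_self_eq_0)
qed

lemma positive_op_kernel:
  assumes pos: "positive_op N n A" and y: "y \<in> Hsp N n" and null: "sesq N n A y y = 0"
  shows "app N n A y = (\<lambda>_. 0)"
proof -
  define z where "z = app N n A y"
  define a where "a = (\<Sum>i\<in>basis N n. (cmod (z i))\<^sup>2)"
  define b where "b = Re (sesq N n A z z)"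
  have z: "z \<in> Hsp N n"
    by (simp add: z_def)
  have "sesq N n A z y = inner_H N n z z"
    by (simp add: z_def inner_app_eq_sesq)
  then have a: "sesq N n A z y = of_real a"
    by (simp add: a_def inner_H_self)
  then have a': "sesq N n A y z = of_real a"
    using sesq_hermitian_swap[OF positive_op_hermitian[OF pos], of y z] by simp
  have b: "0 \<le> b" "sesq N n A z z = of_real b"
    using positive_op_sesq[OF pos z] by (simp_all add: b_def complex_eq_iff)
  have quadratic: "0 \<le> t * (t * b - 2 * a)" for t :: real
  proof -
    have "(\<lambda>i. y i + of_real (- t) * z i) \<in> Hsp N n"
      using y z by (simp add: Hsp_def)
    from positive_op_sesq(2)[OF pos this]
    have "0 \<le> - t * a - t * a + t * t * b"
      unfolding sesq_expand null a a' b by simp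
    then show ?thesis
      by (simp add: algebra_simps)
  qed
  have "a = 0"
  proof (rule ccontr)
    assume "a \<noteq> 0"
    then have "0 < a"
      by (simp add: a_def sum_nonneg order_le_neq_trans)
    moreover have "a / (b + 1) * b \<le> a"
      using \<open>0 < a\<close> b by (simp add: field_simps)
    ultimately have "0 < a / (b + 1)" "a / (b + 1) * b - 2 * a < 0"
      using b by simp_all
    from mult_pos_neg[OF this] quadratic[of "a / (b + 1)"] show False
      by linarith
  qed
  then have "inner_H N n z z = 0"
    by (simp add: a_def inner_H_self)
  then show ?thesis
    using z by (simp add: z_def inner_H_self_eq_0)
qed


section \<open>The kernel of an invariant state\<close>

lemma invariant_state_positive: "invariant_state N n \<Gamma> \<gamma> \<rho> \<Longrightarrow> positive_op N n \<rho>"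
  by (simp add: invariant_state_def is_state_def)

lemma sesq_generator_on_kernel:
  assumes herm: "hermitian_op N n \<rho>" and x: "app N n \<rho> x = (\<lambda>_. 0)"
  shows "sesq N n (generator N n \<Gamma> \<gamma> \<rho>) x x =
    (\<Sum>w\<in>freqs N. \<Sum>e\<in>{Pos, Neg}.
       sesq N n \<rho> (app N n (adj (Kraus N n \<Gamma> e w)) x) (app N n (adj (Kraus N n \<Gamma> e w)) x))"
proof -
  have left: "sesq N n (mmul N n M \<rho>) x x = 0" for M
    by (simp add: x app_mmul flip: inner_app_eq_sesq) (simp add: app_def inner_H_def)
  have right: "sesq N n (mmul N n \<rho> M) x x = 0" for M
    using hermitian_kernel_orth_range[OF herm x] by (simp add: app_mmul flip: inner_app_eq_sesq)
  have sandwich: "sesq N n (mmul N n (mmul N n K \<rho>) (adj K)) x x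
      = sesq N n \<rho> (app N n (adj K) x) (app N n (adj K) x)" for K
  proof -
    have "sesq N n (mmul N n (mmul N n K \<rho>) (adj K)) x x
        = inner_H N n x (app N n K (app N n \<rho> (app N n (adj K) x)))"
      by (simp add: app_mmul flip: inner_app_eq_sesq)
    also have "\<dots> = inner_H N n (app N n (adj K) x) (app N n \<rho> (app N n (adj K) x))"
      by (rule inner_app_adj)
    finally show ?thesis
      by (simp add: inner_app_eq_sesq)
  qed
  show ?thesis
    unfolding generator_def by (simp only: sesq_add sesq_diff sesq_scal sesq_sum left right sandwich) simp
qed

lemma finite_freqs [simp]: "finite (freqs N)"
  by (simp add: freqs_def)

lemma invariant_state_kernel_adj_Kraus:
  assumes inv: "invariant_state N n \<Gamma> \<gamma> \<rho>" and x: "app N n \<rho> x = (\<lambda>_. 0)" and w: "w \<in> freqs N"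
  shows "app N n \<rho> (app N n (adj (Kraus N n \<Gamma> e w)) x) = (\<lambda>_. 0)"
proof -
  have pos: "positive_op N n \<rho>"
    using inv by (rule invariant_state_positive)
  define q where "q e w = sesq N n \<rho> (app N n (adj (Kraus N n \<Gamma> e w)) x) (app N n (adj (Kraus N n \<Gamma> e w)) x)"
    for e w
  have q: "Im (q e w) = 0" "0 \<le> Re (q e w)" for e w
    unfolding q_def by (simp_all add: positive_op_sesq[OF pos])
  have "sesq N n (generator N n \<Gamma> \<gamma> \<rho>) x x = 0"
    using inv by (simp add: invariant_state_def sesq_def)
  then have "Re (\<Sum>w\<in>freqs N. \<Sum>e\<in>{Pos, Neg}. q e w) = 0"
    by (simp add: sesq_generator_on_kernel[OF positive_op_hermitian[OF pos] x] q_def)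
  then have "(\<Sum>w\<in>freqs N. \<Sum>e\<in>{Pos, Neg}. Re (q e w)) = 0"
    by (simp only: Re_sum)
  then have "Re (q Pos w) + Re (q Neg w) = 0"
    using w q(2) by (simp add: sum_nonneg sum_nonneg_eq_0_iff)
  then have "Re (q e w) = 0"
    using q(2)[of Pos w] q(2)[of Neg w] by (cases e) auto
  then have "q e w = 0"
    using q(1) by (simp add: complex_eq_iff)
  then show ?thesis
    unfolding q_def by (rule positive_op_kernel[OF pos app_in_Hsp])
qed

lemma invariant_state_kernel_Zop:
  assumes inv: "invariant_state N n \<Gamma> \<gamma> \<rho>" and x: "app N n \<rho> x = (\<lambda>_. 0)"
    and k: "1 \<le> k" "k < N" and rate: "0 < \<Gamma> Pos (Wk k)"
  shows "app N n \<rho> (app N n (Zop n k) x) = (\<lambda>_. 0)"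
proof -
  have "Wk k \<in> freqs N"
    using k by (simp add: freqs_def)
  from invariant_state_kernel_adj_Kraus[OF inv x this, of Pos]
  have "(\<lambda>i. of_real (sqrt (\<Gamma> Pos (Wk k))) * app N n \<rho> (app N n (Zop n k) x) i) = (\<lambda>_. 0)"
    by (simp add: Kraus_def adj_scal app_scal app_cmult)
  then show ?thesis
    using rate by (simp add: fun_eq_iff)
qed


section \<open>The transport operators\<close>

lemma Zop_Site:
  "Zop n k (Site k' b) (Site k'' a) =
     (if k' = Suc k \<and> k'' = k \<and> b < n (Suc k) \<and> a < n k
      then of_real (1 / sqrt (real (n k))) * zeta n k ^ (b * a) else 0)"
proof -
  have "zeta n k ^ (b' * a') * ketbra (ket (Site (Suc k) b')) (ket (Site k a')) (Site k' b) (Site k'' a) =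
     (if a' = a then if b' = b then if k' = Suc k \<and> k'' = k then zeta n k ^ (b * a) else 0 else 0 else 0)"
    for b' a'
    by (auto simp: ketbra_def ket_def)
  then show ?thesis
    unfolding Zop_def by (cases "a < n k") (simp_all add: sum.delta)
qed

lemma Zop_Plus_Minus [simp]:
  "Zop n k Plus j = 0" "Zop n k Minus j = 0" "Zop n k i Plus = 0" "Zop n k i Minus = 0"
  by (simp_all add: Zop_def ketbra_def ket_def)

lemma sum_roots_unity_orthogonal:
  assumes m: "0 < m" and b: "b < m" "b' < m"
  shows "(\<Sum>a<m. cis (2 * pi / m) ^ (b' * a) * cnj (cis (2 * pi / m) ^ (b * a)))
    = (if b' = b then of_nat m else 0)"
proof -
  define \<zeta> where "\<zeta> = cis (2 * pi / m)"
  define q where "q = \<zeta> ^ b' * cnj (\<zeta> ^ b)"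
  have root: "\<zeta> ^ j = cis (2 * pi * real j / real m)" for j
    unfolding \<zeta>_def Complex.DeMoivre by (rule arg_cong[where f = cis]) simp
  have "\<zeta> ^ m = 1"
    using m by (simp add: root)
  moreover have "q ^ m = (\<zeta> ^ m) ^ b' * cnj ((\<zeta> ^ m) ^ b)"
    unfolding q_def power_mult_distrib complex_cnj_power power_mult[symmetric] by (simp add: mult.commute)
  ultimately have qm: "q ^ m = 1"
    by simp
  have "q = 1 \<longleftrightarrow> \<zeta> ^ b' = \<zeta> ^ b"
    by (simp add: q_def root cis_cnj cis_mult flip: cis_divide)
  also have "\<dots> \<longleftrightarrow> b' = b"
    using inj_onD[OF bij_betw_imp_inj_on[OF Complex.bij_betw_roots_unity[OF m]]] b by (auto simp: root)
  finally have q1: "q = 1 \<longleftrightarrow> b' = b" .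
  have "(\<Sum>a<m. \<zeta> ^ (b' * a) * cnj (\<zeta> ^ (b * a))) = (\<Sum>a<m. q ^ a)"
    by (simp add: q_def power_mult power_mult_distrib)
  also have "\<dots> = (if b' = b then of_nat m else 0)"
    using q1 qm by (cases "b' = b") (simp_all add: geometric_sum)
  finally show ?thesis
    by (simp add: \<zeta>_def)
qed

lemma sum_basis_Site:
  assumes "1 \<le> k" "k \<le> N" and "\<forall>l\<in>basis N n. l \<notin> Site k ` {..<n k} \<longrightarrow> f l = 0"
  shows "(\<Sum>l\<in>basis N n. f l) = (\<Sum>a<n k. f (Site k a))"
proof -
  have "(\<Sum>l\<in>basis N n. f l) = (\<Sum>l\<in>Site k ` {..<n k}. f l)"
    using assms by (intro sum.mono_neutral_right) auto
  also have "\<dots> = (\<Sum>a<n k. f (Site k a))"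
    by (simp add: sum.reindex inj_on_def)
  finally show ?thesis .
qed

lemma Zop_mmul_adj_column:
  assumes k: "1 \<le> k" "k \<le> N" and b: "b < n (Suc k)" and mono: "n (Suc k) \<le> n k"
  shows "mmul N n (Zop n k) (adj (Zop n k)) i (Site (Suc k) b) = ket (Site (Suc k) b) i"
proof -
  have "mmul N n (Zop n k) (adj (Zop n k)) i (Site (Suc k) b)
      = (\<Sum>a<n k. Zop n k i (Site k a) * cnj (Zop n k (Site (Suc k) b) (Site k a)))"
    unfolding mmul_def adj_def
  proof (rule sum_basis_Site[OF k], intro ballI impI)
    fix l assume "l \<notin> Site k ` {..<n k}"
    then show "Zop n k i l * cnj (Zop n k (Site (Suc k) b) l) = 0"
      by (cases l) (auto simp: Zop_Site)
  qed
  also have "\<dots> = ket (Site (Suc k) b) i"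
  proof (cases "\<exists>b'. i = Site (Suc k) b' \<and> b' < n (Suc k)")
    case True
    then obtain b' where i: "i = Site (Suc k) b'" and b': "b' < n (Suc k)"
      by blast
    have nk: "0 < n k"
      using b mono by simp
    have "(\<Sum>a<n k. Zop n k i (Site k a) * cnj (Zop n k (Site (Suc k) b) (Site k a)))
        = of_real (1 / real (n k)) * (\<Sum>a<n k. zeta n k ^ (b' * a) * cnj (zeta n k ^ (b * a)))"
    proof -
      have "complex_of_real (sqrt (real (n k))) * complex_of_real (sqrt (real (n k))) = of_nat (n k)"
        by (simp flip: of_real_mult)
      then show ?thesis
        using i b b' by (simp add: Zop_Site sum_distrib_left mult_ac)
    qed
    also have "\<dots> = ket (Site (Suc k) b) i"
      using sum_roots_unity_orthogonal[OF nk, of b b'] b b' mono nk i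
      by (simp add: zeta_def ket_def)
    finally show ?thesis .
  next
    case False
    then show ?thesis
      using b by (cases i) (auto simp: Zop_Site ket_def)
  qed
  finally show ?thesis .
qed

lemma Zop_Zop_adj_ket:
  assumes k: "1 \<le> k" "k < N" and b: "b < n (Suc k)" and mono: "n (Suc k) \<le> n k"
  shows "app N n (Zop n k) (app N n (adj (Zop n k)) (ket (Site (Suc k) b))) = ket (Site (Suc k) b)"
proof -
  have e: "Site (Suc k) b \<in> basis N n"
    using k b by simp
  have "app N n (mmul N n (Zop n k) (adj (Zop n k))) (ket (Site (Suc k) b)) i = ket (Site (Suc k) b) i"
    for i
    using e Zop_mmul_adj_column[OF k(1) less_imp_le[OF k(2)] b mono, of i]
    by (simp add: app_ket[OF e]) (auto simp: ket_def)
  then show ?thesis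
    by (simp add: fun_eq_iff flip: app_mmul)
qed

lemma Zop_adj_ket_in_ran_absZ:
  assumes k: "1 \<le> k" "k < N" and b: "b < n (Suc k)" and mono: "n (Suc k) \<le> n k"
  shows "app N n (adj (Zop n k)) (ket (Site (Suc k) b)) \<in> ran_op N n (absZ N n k)"
proof -
  let ?u = "app N n (adj (Zop n k)) (ket (Site (Suc k) b))"
  have "app N n (absZ N n k) ?u = ?u"
    by (simp add: absZ_def app_mmul Zop_Zop_adj_ket[OF assms])
  then show ?thesis
    unfolding ran_op_def by (metis app_in_Hsp image_eqI)
qed

lemma app_Zop_eq_0_if_perp_ran_absZ:
  assumes k: "1 \<le> k" "k < N" and mono: "n (Suc k) \<le> n k"
    and w: "w \<in> perp N n (ran_op N n (absZ N n k))"
  shows "app N n (Zop n k) w = (\<lambda>_. 0)"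
proof
  fix i
  show "app N n (Zop n k) w i = 0"
  proof (cases "\<exists>b. i = Site (Suc k) b \<and> b < n (Suc k)")
    case True
    then obtain b where i: "i = Site (Suc k) b" and b: "b < n (Suc k)"
      by blast
    then have "app N n (Zop n k) w i = inner_H N n (ket i) (app N n (Zop n k) w)"
      using k by (simp add: inner_ket)
    also have "\<dots> = inner_H N n (app N n (adj (Zop n k)) (ket i)) w"
      by (rule inner_app_adj)
    also have "\<dots> = 0"
      using w Zop_adj_ket_in_ran_absZ[OF k b mono] by (simp add: i perp_def)
    finally show ?thesis .
  next
    case False
    then have "Zop n k i j = 0" for j
      by (cases i; cases j) (auto simp: Zop_Site)
    then show ?thesis
      by (simp add: app_def)
  qed
qed


section \<open>Invariant states with range orthogonal to the range of \<open>|Z|\<^sub>1\<close>\<close>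

lemma invariant_state_kernel_Site:
  assumes inv: "invariant_state N n \<Gamma> \<gamma> \<rho>"
    and mono: "\<forall>k. 1 \<le> k \<and> k < N \<longrightarrow> n (Suc k) \<le> n k"
    and rates: "\<forall>k. 1 \<le> k \<and> k < N \<longrightarrow> 0 < \<Gamma> Pos (Wk k)"
    and supp: "supported_on N n \<rho> (perp N n (ran_op N n (absZ N n 1)))"
    and m: "2 \<le> m" "m \<le> N" and b: "b < n m"
  shows "app N n \<rho> (ket (Site m b)) = (\<lambda>_. 0)"
  using m b
proof (induction m arbitrary: b rule: nat_induct_at_least)
  case base
  let ?u = "app N n (adj (Zop n 1)) (ket (Site 2 b))"
  have N: "1 < N"
    using base by simp
  have "?u \<in> ran_op N n (absZ N n 1)"
    using Zop_adj_ket_in_ran_absZ[of 1 N b n] mono base N by (simp add: numeral_2_eq_2)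
  then have "\<forall>v\<in>Hsp N n. inner_H N n ?u (app N n \<rho> v) = 0"
    using supp by (auto simp: supported_on_def ran_op_def perp_def)
  then have "app N n \<rho> ?u = (\<lambda>_. 0)"
    using inv by (intro hermitian_kernel_if_orth_range positive_op_hermitian invariant_state_positive)
  from invariant_state_kernel_Zop[OF inv this _ N] rates N
  have "app N n \<rho> (app N n (Zop n 1) ?u) = (\<lambda>_. 0)"
    by simp
  then show ?case
    using Zop_Zop_adj_ket[of 1 N b n] mono base N by (simp add: numeral_2_eq_2)
next
  case (Suc m)
  let ?u = "app N n (adj (Zop n m)) (ket (Site (Suc m) b))"
  have e: "Site (Suc m) b \<in> basis N n"
    using Suc by simp
  have "app N n \<rho> ?u = (\<lambda>_. 0)"
  proof (rule app_eq_0_if_columns_vanish, intro ballI impI)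
    fix l assume "l \<in> basis N n" "?u l \<noteq> 0"
    then obtain a where "l = Site m a" "a < n m"
      using e by (cases l) (auto simp: app_ket adj_def Zop_Site split: if_splits)
    then show "app N n \<rho> (ket l) = (\<lambda>_. 0)"
      using Suc by simp
  qed
  from invariant_state_kernel_Zop[OF inv this] rates Suc
  have "app N n \<rho> (app N n (Zop n m) ?u) = (\<lambda>_. 0)"
    by simp
  then show ?case
    using Zop_Zop_adj_ket[of m N b n] mono Suc by simp
qed

lemma invariant_state_range_Site:
  assumes inv: "invariant_state N n \<Gamma> \<gamma> \<rho>"
    and mono: "\<forall>k. 1 \<le> k \<and> k < N \<longrightarrow> n (Suc k) \<le> n k"
    and rates: "\<forall>k. 1 \<le> k \<and> k < N \<longrightarrow> 0 < \<Gamma> Pos (Wk k)"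
    and supp: "supported_on N n \<rho> (perp N n (ran_op N n (absZ N n 1)))"
    and m: "2 \<le> m"
  shows "app N n \<rho> v (Site m b) = 0"
proof (cases "Site m b \<in> basis N n")
  case True
  have "hermitian_op N n \<rho>"
    using inv by (intro positive_op_hermitian invariant_state_positive)
  moreover have "app N n \<rho> (ket (Site m b)) = (\<lambda>_. 0)"
    using invariant_state_kernel_Site[OF inv mono rates supp m] True by simp
  ultimately show ?thesis
    using hermitian_kernel_orth_range[of N n \<rho> "ket (Site m b)" v] True by (simp add: inner_ket)
qed (auto simp: app_def)

lemma VspD:
  assumes "w \<in> Vsp N n"
  shows "w Plus = 0" "w Minus = 0" "inner_H N n (phi n 1 0) w = 0" "inner_H N n (phi n N 0) w = 0"
proof -
  have "ket Plus \<in> Vgen N n" "ket Minus \<in> Vgen N n" "phi n 1 0 \<in> Vgen N n" "phi n N 0 \<in> Vgen N n"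
    unfolding Vgen_def by (auto intro!: exI[of _ 0])
  then show "w Plus = 0" "w Minus = 0" "inner_H N n (phi n 1 0) w = 0" "inner_H N n (phi n N 0) w = 0"
    using assms by (auto simp: Vsp_def perp_def inner_ket)
qed

lemma mem_Wsp_if_supported_on_first_site:
  assumes w: "w \<in> Hsp N n" and PM: "w Plus = 0" "w Minus = 0"
    and sites: "\<forall>m b. 2 \<le> m \<longrightarrow> w (Site m b) = 0"
    and phi: "inner_H N n (phi n 1 0) w = 0" "inner_H N n (phi n N 0) w = 0"
    and Z1: "app N n (Zop n 1) w = (\<lambda>_. 0)"
  shows "w \<in> Wsp N n \<Gamma>"
proof -
  have supp: "\<exists>a. j = Site 1 a" if "w j \<noteq> 0" for j
  proof (cases j)
    case (Site m a)
    have "j \<in> basis N n"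
      using w that unfolding Hsp_def by blast
    then show ?thesis
      using sites that Site by (cases "2 \<le> m") auto
  qed (use PM that in auto)
  have Z: "app N n (Zop n k) w = (\<lambda>_. 0)" for k
  proof (cases "k = 1")
    case False
    then have "Zop n k i j * w j = 0" for i j
      using supp[of j] by (cases i) (auto simp: Zop_Site)
    then show ?thesis
      by (auto simp: app_def fun_eq_iff intro!: sum.neutral)
  qed (use Z1 in simp)
  have Z_adj: "app N n (adj (Zop n k)) w = (\<lambda>_. 0)" if "1 \<le> k" for k
  proof -
    have "adj (Zop n k) i j * w j = 0" for i j
      using supp[of j] that by (cases i) (auto simp: Zop_Site adj_def)
    then show ?thesis
      by (auto simp: app_def fun_eq_iff intro!: sum.neutral)
  qed
  have "app N n (Kraus N n \<Gamma> e f) w = (\<lambda>_. 0) \<and> app N n (adj (Kraus N n \<Gamma> e f)) w = (\<lambda>_. 0)"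
    if "f \<in> freqs N" for e f
    using that PM phi
    by (cases e; cases f)
      (auto simp: Kraus_def freqs_def adj_scal adj_ketbra app_scal app_ketbra inner_ket Z Z_adj)
  then show ?thesis
    using w by (auto simp: Wsp_def ker_op_def)
qed

theorem corollary3p18:
  fixes N :: nat and n :: "nat \<Rightarrow> nat"
    and \<Gamma> \<gamma> :: "pm \<Rightarrow> freq \<Rightarrow> real" and \<rho> :: op
  assumes "N \<ge> 2"
    and "\<forall>k. 1 \<le> k \<and> k < N \<longrightarrow> n (Suc k) \<le> n k"
    and "\<forall>k. 1 \<le> k \<and> k \<le> N \<longrightarrow> 1 \<le> n k"
    and "\<forall>w\<in>freqs N. \<forall>e. 0 < \<Gamma> e w"
    and "invariant_state N n \<Gamma> \<gamma> \<rho>"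
    and "supported_on N n \<rho> (Vsp N n \<inter> perp N n (ran_op N n (absZ N n 1)))"
  shows "supported_on N n \<rho> (Wsp N n \<Gamma>)"
proof -
  have rates: "\<forall>k. 1 \<le> k \<and> k < N \<longrightarrow> 0 < \<Gamma> Pos (Wk k)"
    using assms(4) by (auto simp: freqs_def)
  have supp: "supported_on N n \<rho> (perp N n (ran_op N n (absZ N n 1)))"
    using assms(6) by (auto simp: supported_on_def)
  show ?thesis
    unfolding supported_on_def
  proof
    fix w assume w: "w \<in> ran_op N n \<rho>"
    then have "w \<in> Hsp N n" "w \<in> Vsp N n" "w \<in> perp N n (ran_op N n (absZ N n 1))"
      using assms(6) by (auto simp: supported_on_def ran_op_def)
    moreover have "\<forall>m b. 2 \<le> m \<longrightarrow> w (Site m b) = 0"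
      using w invariant_state_range_Site[OF assms(5) assms(2) rates supp] by (auto simp: ran_op_def)
    ultimately show "w \<in> Wsp N n \<Gamma>"
      using assms(1,2) VspD app_Zop_eq_0_if_perp_ran_absZ[of 1 N n w]
      by (intro mem_Wsp_if_supported_on_first_site) auto
  qed
qed

end
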